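(* Let $n\ge 3$ be an integer, $t\in(0,1)$, and let $l$ range over non-negative integers. (1) For $0<\alpha<n$, the quantity $\frac{\Gamma(l+\frac{n-\alpha}2)^2}{\Gamma(l+\frac n2)^2}F\big(l+\frac{n+\alpha}2-1,\frac\alpha2;l+\frac n2;t\big)^2$ is strictly decreasing in $l$. (2) For $\alpha\le0$, the quantity $\frac{\Gamma(l+\frac{n-\alpha}2)^2}{\Gamma(l+\frac n2)^2}t^l F\big(l+\frac{n+\alpha}2-1,\frac\alpha2;l+\frac n2;t\big)^2$ is strictly decreasing in $l$.
   Context: $F(a,b;c;z)=\sum_{r\ge0}\frac{(a)_r(b)_r}{(c)_r}\frac{z^r}{r!}$ for $|z|<1$ is the Gauss hypergeometric function, where $(a)_0=1$ and $(a)_r=a(a+1)\cdots(a+r-1)$. *)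

theory Defs
  imports "HOL-Analysis.Analysis"
begin

definition hyp2F1 :: "real \<Rightarrow> real \<Rightarrow> real \<Rightarrow> real \<Rightarrow> real" where
  "hyp2F1 a b c z =
     (\<Sum>r. pochhammer a r * pochhammer b r / pochhammer c r * z ^ r / fact r)"

end

(*
  Write c = l + n/2.

  For 0 < alpha < n put b = alpha/2; the l-th term is (Gamma (c - b) / Gamma c * F(c+b-1, b; c; t))^2.
  Passing from c to c + 1 multiplies the Gamma ratio by (c - b)/c, so it suffices that
  (c - b) F(c+b, b; c+1; t) < c F(c+b-1, b; c; t). This follows from the contiguous relation
  c F(a,b;c) - (c-b) F(a+1,b;c+1) = b (1-t) F(a+1,b+1;c+1), whose right-hand side is positive.

  For alpha <= 0 put beta = -alpha/2. Euler's transformation F(a,b;c;t) = (1-t)^(c-a-b) F(c-a,c-b;c;t)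
  gives both hypergeometric factors the common prefactor (1-t)^(1+2 beta) and leaves series
  Q(t) = sum q_s t^s and P(t) = sum p_s t^s with nonnegative coefficients satisfying
  p_s^2 <= q_s q_(s+1). Summing the AM-GM bounds 2 sqrt t p_s t^s <= q_s t^s + q_(s+1) t^(s+1)
  gives sqrt t P(t) < Q(t), which is the required step.

  Both identities are proved for formal power series; Euler's transformation comes from the
  uniqueness of the power series solution of the hypergeometric differential equation.
*)
theory Submission
  imports Defs "HOL-Real_Asymp.Real_Asymp"
begin

unbundle no vec_syntax
unbundle fps_syntax

lemma fps_XD_diff: "fps_XD (f - g) = fps_XD f - (fps_XD g :: 'a :: comm_ring_1 fps)"
  by (simp add: fps_XD_def algebra_simps)

lemma fps_XD_mult: "fps_XD (f * g) = fps_XD f * g + f * (fps_XD g :: 'a :: comm_ring_1 fps)"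
  by (simp add: fps_XD_def algebra_simps)

lemma eval_fps_const_mult:
  fixes f :: "'a :: {banach, real_normed_div_algebra, comm_ring_1} fps"
  assumes "ereal (norm z) < fps_conv_radius f"
  shows "eval_fps (fps_const c * f) z = c * eval_fps f z"
  using eval_fps_mult[of z "fps_const c" f] assms by simp

lemma fps_conv_radius_const_mult_ge:
  "fps_conv_radius f \<le> fps_conv_radius (fps_const c * f)"
  using fps_conv_radius_mult[of "fps_const c" f] by simp

lemma Gamma_plus1_pos: "0 < x \<Longrightarrow> Gamma (x + 1) = x * Gamma (x :: real)"
  by (rule Gamma_plus1) (auto elim: nonpos_Ints_cases)

section \<open>The Gauss hypergeometric series\<close>

definition hypergeo_fps :: "real \<Rightarrow> real \<Rightarrow> real \<Rightarrow> real fps" where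
  "hypergeo_fps a b c = Abs_fps (\<lambda>r. pochhammer a r * pochhammer b r / (pochhammer c r * fact r))"

lemma hypergeo_fps_nth:
  "hypergeo_fps a b c $ r = pochhammer a r * pochhammer b r / (pochhammer c r * fact r)"
  by (simp add: hypergeo_fps_def)

lemma hypergeo_fps_nth_0 [simp]: "hypergeo_fps a b c $ 0 = 1"
  by (simp add: hypergeo_fps_nth)

lemma hyp2F1_eq_eval_fps: "hyp2F1 a b c z = eval_fps (hypergeo_fps a b c) z"
  by (simp add: hyp2F1_def eval_fps_def hypergeo_fps_nth)

lemma hypergeo_fps_nth_Suc:
  assumes "c > 0"
  shows "hypergeo_fps a b c $ Suc r
           = (a + r) * (b + r) / ((c + r) * (real r + 1)) * hypergeo_fps a b c $ r"
  using pochhammer_pos[OF assms, of r] assms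
  by (simp add: hypergeo_fps_nth pochhammer_rec' field_simps)

lemma hypergeo_fps_nth_Suc_shift_abc:
  assumes "c > 0"
  shows "hypergeo_fps a b c $ Suc r
           = a * b / (c * (real r + 1)) * hypergeo_fps (a + 1) (b + 1) (c + 1) $ r"
  using pochhammer_pos[of "c + 1" r] assms
  by (simp add: hypergeo_fps_nth pochhammer_rec[of a] pochhammer_rec[of b] pochhammer_rec[of c]
      field_simps del: pochhammer_Suc)

lemma hypergeo_fps_nth_Suc_shift_b:
  assumes "c > 0"
  shows "hypergeo_fps a b c $ Suc r
           = b * (a + r) / ((c + r) * (real r + 1)) * hypergeo_fps a (b + 1) c $ r"
  using pochhammer_pos[OF assms, of r] assms
  by (simp add: hypergeo_fps_nth pochhammer_rec'[of a] pochhammer_rec[of b] pochhammer_rec'[of c]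
      field_simps del: pochhammer_Suc)

lemma hypergeo_fps_nth_shift_bc:
  "b / c * hypergeo_fps a (b + 1) (c + 1) $ r = (b + r) / (c + r) * hypergeo_fps a b c $ r"
proof -
  have rec: "x * pochhammer (x + 1) r = (x + r) * pochhammer x r" for x :: real
    by (metis pochhammer_rec pochhammer_rec')
  have "b / c * hypergeo_fps a (b + 1) (c + 1) $ r
      = pochhammer a r * (b * pochhammer (b + 1) r) / ((c * pochhammer (c + 1) r) * fact r)"
    by (simp add: hypergeo_fps_nth mult_ac)
  also have "\<dots> = (b + r) / (c + r) * hypergeo_fps a b c $ r"
    unfolding rec by (simp add: hypergeo_fps_nth mult_ac)
  finally show ?thesis .
qed

lemma hypergeo_fps_nth_pos:
  assumes "0 < a" "0 < b" "0 < c"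
  shows "0 < hypergeo_fps a b c $ r"
  using assms by (simp add: hypergeo_fps_nth pochhammer_pos)

lemma fps_conv_radius_hypergeo_fps:
  assumes "c > 0"
  shows "1 \<le> fps_conv_radius (hypergeo_fps a b c)"
  unfolding fps_conv_radius_def
proof (rule conv_radius_geI_ex')
  fix z :: real
  assume z: "0 < z" "ereal z < 1"
  define q where "q r = \<bar>(a + r) * (b + r) / ((c + r) * (real r + 1))\<bar> * z" for r :: nat
  have "q \<longlonglongrightarrow> z"
    unfolding q_def using z(1) by real_asymp
  moreover have "z < (1 + z) / 2"
    using z by simp
  ultimately obtain N where N: "\<And>r. r \<ge> N \<Longrightarrow> q r < (1 + z) / 2"
    using order_tendstoD(2) by (fastforce simp: eventually_sequentially)
  show "summable (\<lambda>r. hypergeo_fps a b c $ r * of_real z ^ r)"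
  proof (rule summable_ratio_test)
    show "(1 + z) / 2 < 1"
      using z by simp
    show "norm (hypergeo_fps a b c $ Suc r * of_real z ^ Suc r)
            \<le> (1 + z) / 2 * norm (hypergeo_fps a b c $ r * of_real z ^ r)" if "r \<ge> N" for r
    proof -
      have "norm (hypergeo_fps a b c $ Suc r * of_real z ^ Suc r)
          = q r * norm (hypergeo_fps a b c $ r * of_real z ^ r)"
        using z by (simp add: hypergeo_fps_nth_Suc[OF assms] q_def abs_mult)
      also have "\<dots> \<le> (1 + z) / 2 * norm (hypergeo_fps a b c $ r * of_real z ^ r)"
        using N[OF that] by (intro mult_right_mono) auto
      finally show ?thesis .
    qed
  qed
qed

lemma norm_less_fps_conv_radius_hypergeo_fps:
  fixes z :: real
  assumes "c > 0" "\<bar>z\<bar> < 1"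
  shows "ereal (norm z) < fps_conv_radius (hypergeo_fps a b c)"
proof -
  have "ereal (norm z) < 1"
    using assms by simp
  then show ?thesis
    using fps_conv_radius_hypergeo_fps[OF assms(1)] by (rule less_le_trans)
qed

lemma hyp2F1_sums:
  fixes z :: real
  assumes "c > 0" "\<bar>z\<bar> < 1"
  shows "(\<lambda>r. hypergeo_fps a b c $ r * z ^ r) sums hyp2F1 a b c z"
  unfolding hyp2F1_eq_eval_fps using assms
  by (intro sums_eval_fps norm_less_fps_conv_radius_hypergeo_fps) auto

lemma hyp2F1_pos:
  assumes "0 < a" "0 < b" "0 < c" "0 \<le> z" "z < 1"
  shows "0 < hyp2F1 a b c z"
proof -
  have sums: "(\<lambda>r. hypergeo_fps a b c $ r * z ^ r) sums hyp2F1 a b c z"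
    using assms by (intro hyp2F1_sums) auto
  then have "0 < (\<Sum>r. hypergeo_fps a b c $ r * z ^ r)"
    using assms hypergeo_fps_nth_pos[of a b c]
    by (intro suminf_pos2[where i = 0]) (auto simp: sums_iff less_imp_le)
  with sums show ?thesis
    by (simp add: sums_iff)
qed

section \<open>The hypergeometric differential equation and Euler's transformation\<close>

text \<open>The equation \<open>\<theta> (\<theta> + c - 1) E = X (\<theta> + a) (\<theta> + b) E\<close> with \<open>\<theta> = X d/dX\<close>;
  \<open>fps_XD\<close> is \<open>\<theta>\<close> and \<open>fps_XDp a\<close> is \<open>\<theta> + a\<close>.\<close>
definition hypergeo_ode :: "real \<Rightarrow> real \<Rightarrow> real \<Rightarrow> real fps \<Rightarrow> bool" where
  "hypergeo_ode a b c E \<longleftrightarrow> fps_XD (fps_XDp (c - 1) E) = fps_X * fps_XDp a (fps_XDp b E)"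

lemma hypergeo_ode_altdef:
  "hypergeo_ode a b c E \<longleftrightarrow> fps_XD (fps_XD E) + (fps_const c - 1) * fps_XD E
     = fps_X * (fps_XD (fps_XD E) + (fps_const a + fps_const b) * fps_XD E + fps_const a * fps_const b * E)"
  by (simp add: hypergeo_ode_def fps_XDp_def fps_eq_iff algebra_simps)

lemma hypergeo_ode_iff_nth:
  "hypergeo_ode a b c E \<longleftrightarrow> (\<forall>r. (r + 1) * (c + r) * E $ Suc r = (a + r) * (b + r) * E $ r)"
proof -
  let ?L = "fps_XD (fps_XDp (c - 1) E)" and ?R = "fps_X * fps_XDp a (fps_XDp b E)"
  have "hypergeo_ode a b c E \<longleftrightarrow> (\<forall>n. ?L $ n = ?R $ n)"
    by (simp add: hypergeo_ode_def fps_eq_iff)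
  also have "\<dots> \<longleftrightarrow> (\<forall>r. ?L $ Suc r = ?R $ Suc r)"
    by (metis fps_XD_0th fps_X_mult_nth not0_implies_Suc)
  also have "\<dots> \<longleftrightarrow> (\<forall>r. (r + 1) * (c + r) * E $ Suc r = (a + r) * (b + r) * E $ r)"
    by (simp add: fps_X_mult_nth algebra_simps)
  finally show ?thesis .
qed

lemma hypergeo_ode_hypergeo_fps:
  assumes "c > 0"
  shows "hypergeo_ode a b c (hypergeo_fps a b c)"
  unfolding hypergeo_ode_iff_nth hypergeo_fps_nth_Suc[OF assms] using assms by (simp add: add.commute)

lemma hypergeo_ode_unique:
  assumes "c > 0" "hypergeo_ode a b c E" "E $ 0 = 1"
  shows "E = hypergeo_fps a b c"
proof -
  have "E $ r = hypergeo_fps a b c $ r" for r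
  proof (induction r)
    case 0
    then show ?case using assms(3) by simp
  next
    case (Suc r)
    have "(real r + 1) * (c + r) * E $ Suc r = (real r + 1) * (c + r) * hypergeo_fps a b c $ Suc r"
      using assms(2) hypergeo_ode_hypergeo_fps[OF assms(1), of a b] Suc.IH
      unfolding hypergeo_ode_iff_nth by metis
    moreover have "(real r + 1) * (c + r) \<noteq> 0"
      using assms(1) by simp
    ultimately show ?case
      by simp
  qed
  then show ?thesis
    by (simp add: fps_eq_iff)
qed

lemma hypergeo_fps_binomial_XD:
  "(1 - fps_X) * fps_XD (hypergeo_fps g 1 1) = fps_const g * fps_X * hypergeo_fps g 1 1"
proof (rule fps_ext)
  fix n
  show "((1 - fps_X) * fps_XD (hypergeo_fps g 1 1)) $ n = (fps_const g * fps_X * hypergeo_fps g 1 1) $ n"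
  proof (cases n)
    case (Suc r)
    have "(1 + real r) * ((real r + 1) * hypergeo_fps g 1 1 $ Suc r)
        = (1 + real r) * ((g + r) * hypergeo_fps g 1 1 $ r)"
      using hypergeo_ode_hypergeo_fps[of 1 g 1] unfolding hypergeo_ode_iff_nth by (simp add: mult_ac)
    then have "(real r + 1) * hypergeo_fps g 1 1 $ Suc r = (g + r) * hypergeo_fps g 1 1 $ r"
      by simp
    with Suc show ?thesis
      by (simp add: ring_distribs algebra_simps)
  qed (simp add: ring_distribs)
qed

lemma hypergeo_fps_binomial_XD_XD:
  "(1 - fps_X) * fps_XD (fps_XD (hypergeo_fps g 1 1)) - fps_X * fps_XD (hypergeo_fps g 1 1)
     = fps_const g * fps_X * (hypergeo_fps g 1 1 + fps_XD (hypergeo_fps g 1 1))"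
proof -
  have "fps_XD ((1 - fps_X) * fps_XD (hypergeo_fps g 1 1)) = fps_XD (fps_const g * fps_X * hypergeo_fps g 1 1)"
    by (simp only: hypergeo_fps_binomial_XD)
  moreover have "fps_XD (fps_X :: real fps) = fps_X" "fps_XD (fps_const g) = 0"
    by (simp_all add: fps_XD_def)
  ultimately show ?thesis
    by (simp add: fps_XD_mult fps_XD_diff algebra_simps)
qed

lemma hypergeo_ode_binomial_mult:
  assumes "hypergeo_ode (c - a) (c - b) c E"
  shows "hypergeo_ode a b c (hypergeo_fps (a + b - c) 1 1 * E)"
proof -
  define W where "W = hypergeo_fps (a + b - c) 1 1"
  define X :: "real fps" where "X = fps_X"
  define A where "A = fps_const a"
  define B where "B = fps_const b"
  define C where "C = fps_const c"
  define G where "G = A + B - C"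
  let ?D = "fps_XD :: real fps \<Rightarrow> real fps"
  have W1: "(1 - X) * ?D W - G * X * W = 0" (is "?W1 = 0")
    using hypergeo_fps_binomial_XD[of "a + b - c"] by (simp add: W_def X_def G_def A_def B_def C_def)
  have W2: "(1 - X) * ?D (?D W) - X * ?D W - G * X * W - G * X * ?D W = 0" (is "?W2 = 0")
    using hypergeo_fps_binomial_XD_XD[of "a + b - c"]
    by (simp add: W_def X_def G_def A_def B_def C_def algebra_simps)
  have E: "?D (?D E) + (C - 1) * ?D E
      - X * (?D (?D E) + ((C - A) + (C - B)) * ?D E + (C - A) * (C - B) * E) = 0" (is "?E = 0")
    using assms unfolding hypergeo_ode_altdef by (simp add: X_def A_def B_def C_def)
  define R where "R = ?D (?D (W * E)) + (C - 1) * ?D (W * E)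
      - X * (?D (?D (W * E)) + (A + B) * ?D (W * E) + A * B * (W * E))"
  have "(1 - X) * R = (1 - X) * E * ?W2 + (1 - X) * W * ?E
      + (E * X * (1 + G) + 2 * (1 - X) * ?D E + (C - 1 - X * (A + B)) * E) * ?W1"
    unfolding R_def G_def by (simp add: fps_XD_mult algebra_simps)
  then have "(1 - X) * R = 0"
    by (simp only: W1 W2 E mult_zero_right add_0)
  moreover have "(1 - X) $ 0 \<noteq> 0"
    by (simp add: X_def)
  then have "1 - X \<noteq> 0"
    by auto
  ultimately have "R = 0"
    by simp
  then show ?thesis
    unfolding hypergeo_ode_altdef R_def W_def[symmetric] by (simp add: X_def A_def B_def C_def)
qed

lemma hypergeo_fps_euler:
  assumes "c > 0"
  shows "hypergeo_fps a b c = hypergeo_fps (a + b - c) 1 1 * hypergeo_fps (c - a) (c - b) c"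
  using hypergeo_ode_unique[OF assms hypergeo_ode_binomial_mult[OF hypergeo_ode_hypergeo_fps[OF assms]]]
  by simp

lemma hyp2F1_binomial:
  fixes t :: real
  assumes "\<bar>t\<bar> < 1"
  shows "hyp2F1 g 1 1 t = (1 - t) powr (- g)"
proof -
  have "(\<lambda>n. (- g gchoose n) * (- t) ^ n) sums (1 + - t) powr (- g)"
    using assms by (intro gen_binomial_real) simp
  moreover have "(- g gchoose n) * (- t) ^ n = hypergeo_fps g 1 1 $ n * t ^ n" for n
  proof -
    have "(- g gchoose n) * (- t) ^ n = ((-1) ^ n * (-1) ^ n) * (pochhammer g n / fact n) * t ^ n"
      by (simp add: gbinomial_pochhammer power_minus[of t] mult_ac)
    then show ?thesis
      by (simp add: hypergeo_fps_nth flip: pochhammer_fact)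
  qed
  ultimately show ?thesis
    by (simp add: hyp2F1_eq_eval_fps eval_fps_def sums_iff)
qed

lemma hyp2F1_euler:
  fixes t :: real
  assumes "c > 0" "\<bar>t\<bar> < 1"
  shows "hyp2F1 a b c t = (1 - t) powr (c - a - b) * hyp2F1 (c - a) (c - b) c t"
proof -
  have "hyp2F1 a b c t = hyp2F1 (a + b - c) 1 1 t * hyp2F1 (c - a) (c - b) c t"
    unfolding hyp2F1_eq_eval_fps hypergeo_fps_euler[OF assms(1), of a b] using assms
    by (intro eval_fps_mult norm_less_fps_conv_radius_hypergeo_fps) auto
  also have "hyp2F1 (a + b - c) 1 1 t = (1 - t) powr (c - a - b)"
    using hyp2F1_binomial[OF assms(2), of "a + b - c"] by (simp add: algebra_simps)
  finally show ?thesis .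
qed

section \<open>A contiguous relation\<close>

lemma hypergeo_fps_contiguous:
  assumes "c > 0"
  shows "fps_const c * hypergeo_fps a b c - fps_const (c - b) * hypergeo_fps (a + 1) b (c + 1)
       = fps_const b * (1 - fps_X) * hypergeo_fps (a + 1) (b + 1) (c + 1)"
proof (rule fps_ext)
  fix n
  define G where "G = hypergeo_fps (a + 1) (b + 1) (c + 1)"
  show "(fps_const c * hypergeo_fps a b c - fps_const (c - b) * hypergeo_fps (a + 1) b (c + 1)) $ n
      = (fps_const b * (1 - fps_X) * G) $ n"
  proof (cases n)
    case (Suc r)
    have F: "hypergeo_fps a b c $ Suc r = a * b / (c * (real r + 1)) * G $ r"
      unfolding G_def by (rule hypergeo_fps_nth_Suc_shift_abc[OF assms])
    have F': "hypergeo_fps (a + 1) b (c + 1) $ Suc r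
        = b * (a + 1 + r) / ((c + 1 + r) * (real r + 1)) * G $ r"
      unfolding G_def using assms by (intro hypergeo_fps_nth_Suc_shift_b) simp
    have G': "G $ Suc r = (a + 1 + r) * (b + 1 + r) / ((c + 1 + r) * (real r + 1)) * G $ r"
      unfolding G_def using assms by (intro hypergeo_fps_nth_Suc) simp
    have coeff_identity: "c * (a * b / (c * (x + 1)) * u) - (c - b) * (b * (a + 1 + x) / ((c + 1 + x) * (x + 1)) * u)
        = b * ((a + 1 + x) * (b + 1 + x) / ((c + 1 + x) * (x + 1)) * u - u)"
      if "c + 1 + x \<noteq> 0" "x + 1 \<noteq> 0" for x u :: real
      using that assms by (simp add: divide_simps) (simp add: algebra_simps)
    have "(fps_const c * hypergeo_fps a b c - fps_const (c - b) * hypergeo_fps (a + 1) b (c + 1)) $ n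
        = c * hypergeo_fps a b c $ Suc r - (c - b) * hypergeo_fps (a + 1) b (c + 1) $ Suc r"
      using Suc by simp
    also have "\<dots> = b * ((a + 1 + r) * (b + 1 + r) / ((c + 1 + r) * (real r + 1)) * G $ r - G $ r)"
      unfolding F F' using assms by (intro coeff_identity) auto
    also have "\<dots> = (fps_const b * (1 - fps_X) * G) $ n"
      unfolding Suc G'[symmetric] by (simp add: ring_distribs mult.assoc)
    finally show ?thesis .
  qed (simp add: G_def algebra_simps)
qed

lemma hyp2F1_contiguous:
  fixes t :: real
  assumes "c > 0" "\<bar>t\<bar> < 1"
  shows "c * hyp2F1 a b c t - (c - b) * hyp2F1 (a + 1) b (c + 1) t
       = b * (1 - t) * hyp2F1 (a + 1) (b + 1) (c + 1) t"
proof -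
  define G where "G = hypergeo_fps (a + 1) (b + 1) (c + 1)"
  have conv: "ereal \<bar>t\<bar> < fps_conv_radius (hypergeo_fps a' b' c')" if "c' > 0" for a' b' c'
    using norm_less_fps_conv_radius_hypergeo_fps[OF that assms(2)] by simp
  have conv_cmult: "ereal \<bar>t\<bar> < fps_conv_radius (fps_const x * hypergeo_fps a' b' c')"
    if "c' > 0" for x a' b' c'
    using conv[OF that] fps_conv_radius_const_mult_ge by (rule less_le_trans)
  have conv_G: "ereal \<bar>t\<bar> < fps_conv_radius G"
    using conv[of "c + 1"] assms(1) by (simp add: G_def)
  then have conv_XG: "ereal \<bar>t\<bar> < fps_conv_radius (fps_X * G)"
    using fps_conv_radius_mult[of fps_X G] by simp
  have conv_diff: "ereal \<bar>t\<bar> < fps_conv_radius (G - fps_X * G)"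
    using conv_G conv_XG fps_conv_radius_diff[of G "fps_X * G"]
    by (auto intro: less_le_trans[of _ "min _ _"])
  have "c * hyp2F1 a b c t - (c - b) * hyp2F1 (a + 1) b (c + 1) t
      = eval_fps (fps_const c * hypergeo_fps a b c - fps_const (c - b) * hypergeo_fps (a + 1) b (c + 1)) t"
    unfolding hyp2F1_eq_eval_fps using assms conv
    by (simp add: eval_fps_diff conv_cmult eval_fps_const_mult)
  also have "\<dots> = eval_fps (fps_const b * (G - fps_X * G)) t"
    unfolding G_def hypergeo_fps_contiguous[OF assms(1)] by (simp add: algebra_simps)
  also have "\<dots> = b * (eval_fps G t - t * eval_fps G t)"
    using conv_G conv_XG conv_diff by (simp add: eval_fps_const_mult eval_fps_diff eval_fps_mult)
  finally show ?thesis
    by (simp add: G_def hyp2F1_eq_eval_fps algebra_simps)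
qed

section \<open>The two monotonicity steps\<close>

lemma hyp2F1_contiguous_less:
  fixes t :: real
  assumes "-1 < a" "0 < b" "0 < c" "0 < t" "t < 1"
  shows "(c - b) * hyp2F1 (a + 1) b (c + 1) t < c * hyp2F1 a b c t"
proof -
  have "0 < b * (1 - t) * hyp2F1 (a + 1) (b + 1) (c + 1) t"
    using assms by (simp add: hyp2F1_pos)
  then show ?thesis
    using hyp2F1_contiguous[of c t a b] assms by simp
qed

lemma Gamma_ratio_hyp2F1_sq_Suc_less:
  fixes t :: real
  assumes "0 < b" "b < c" "0 < t" "t < 1"
  shows "(Gamma (c + 1 - b) / Gamma (c + 1) * hyp2F1 (c + b) b (c + 1) t)\<^sup>2
       < (Gamma (c - b) / Gamma c * hyp2F1 (c + b - 1) b c t)\<^sup>2"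
proof -
  define K where "K = Gamma (c - b) / (c * Gamma c)"
  have "0 < K"
    using assms by (simp add: K_def)
  have "Gamma (c + 1 - b) / Gamma (c + 1) = K * (c - b)"
    using Gamma_plus1_pos[of "c - b"] Gamma_plus1_pos[of c] assms by (simp add: K_def algebra_simps)
  moreover have "Gamma (c - b) / Gamma c = K * c"
    using assms by (simp add: K_def)
  moreover have "0 < (c - b) * hyp2F1 (c + b) b (c + 1) t"
    using assms by (simp add: hyp2F1_pos)
  moreover have "(c - b) * hyp2F1 (c + b - 1 + 1) b (c + 1) t < c * hyp2F1 (c + b - 1) b c t"
    using assms by (intro hyp2F1_contiguous_less) auto
  ultimately show ?thesis
    using \<open>0 < K\<close> by (simp add: mult.assoc power_strict_mono)
qed

lemma sqrt_mult_suminf_less: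
  fixes p q :: "nat \<Rightarrow> real"
  assumes p: "summable (\<lambda>s. p s * t ^ s)" and q: "summable (\<lambda>s. q s * t ^ s)"
    and "0 \<le> t" "\<And>s. 0 \<le> q s" "\<And>s. (p s)\<^sup>2 \<le> q s * q (Suc s)" "0 < q 0"
  shows "sqrt t * (\<Sum>s. p s * t ^ s) < (\<Sum>s. q s * t ^ s)"
proof -
  have q_Suc: "summable (\<lambda>s. q (Suc s) * t ^ Suc s)"
    using q by (subst summable_Suc_iff)
  have term_bound: "sqrt t * (p s * t ^ s) \<le> (q s * t ^ s + q (Suc s) * t ^ Suc s) / 2" for s
  proof -
    have "(sqrt t * (p s * t ^ s))\<^sup>2 = t * (p s)\<^sup>2 * (t ^ s)\<^sup>2"
      using assms(3) by (simp add: power_mult_distrib)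
    also have "\<dots> \<le> t * (q s * q (Suc s)) * (t ^ s)\<^sup>2"
      using assms by (intro mult_right_mono mult_left_mono) auto
    also have "\<dots> = q s * t ^ s * (q (Suc s) * t ^ Suc s)"
      by (simp add: power2_eq_square algebra_simps)
    finally have "sqrt t * (p s * t ^ s) \<le> sqrt (q s * t ^ s * (q (Suc s) * t ^ Suc s))"
      by (rule real_le_rsqrt)
    also have "\<dots> \<le> (q s * t ^ s + q (Suc s) * t ^ Suc s) / 2"
      using assms by (intro arith_geo_mean_sqrt) auto
    finally show ?thesis .
  qed
  have "sqrt t * (\<Sum>s. p s * t ^ s) = (\<Sum>s. sqrt t * (p s * t ^ s))"
    using p by (rule suminf_mult[symmetric])
  also have "\<dots> \<le> (\<Sum>s. (q s * t ^ s + q (Suc s) * t ^ Suc s) / 2)"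
    using p q q_Suc term_bound by (intro suminf_le summable_mult summable_divide summable_add) auto
  also have "\<dots> = (\<Sum>s. q s * t ^ s) - q 0 / 2"
    using suminf_add[OF q q_Suc] suminf_split_head[OF q] suminf_divide[OF summable_add[OF q q_Suc], of 2]
    by simp
  also have "\<dots> < (\<Sum>s. q s * t ^ s)"
    using assms by simp
  finally show ?thesis .
qed

lemma hypergeo_fps_nth_shift_bc_sq_le:
  assumes "0 < a" "0 < b" "0 < c" "b \<le> a * c" "b + 1 \<le> a + c"
  shows "(b / c * hypergeo_fps a (b + 1) (c + 1) $ s)\<^sup>2 \<le> hypergeo_fps a b c $ s * hypergeo_fps a b c $ Suc s"
proof -
  define \<rho> where "\<rho> = (b + s) / (c + s)"
  define \<sigma> where "\<sigma> = (a + s) / (real s + 1)"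
  have "0 \<le> real s * (a + c - (b + 1))"
    using assms by simp
  then have "(b + s) * (real s + 1) \<le> (a + s) * (c + s)"
    using assms by (simp add: algebra_simps)
  then have "\<rho> \<le> \<sigma>"
    using assms by (simp add: \<rho>_def \<sigma>_def divide_simps)
  moreover have "0 \<le> \<rho>"
    using assms by (simp add: \<rho>_def)
  ultimately have "\<rho> * \<rho> * (hypergeo_fps a b c $ s)\<^sup>2 \<le> \<sigma> * \<rho> * (hypergeo_fps a b c $ s)\<^sup>2"
    by (intro mult_right_mono) auto
  moreover have "b / c * hypergeo_fps a (b + 1) (c + 1) $ s = \<rho> * hypergeo_fps a b c $ s"
    unfolding \<rho>_def by (rule hypergeo_fps_nth_shift_bc)
  moreover have "hypergeo_fps a b c $ Suc s = \<sigma> * \<rho> * hypergeo_fps a b c $ s"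
    unfolding \<rho>_def \<sigma>_def using assms by (simp add: hypergeo_fps_nth_Suc mult_ac)
  ultimately show ?thesis
    by (simp add: power2_eq_square mult_ac)
qed

lemma sqrt_mult_hyp2F1_shift_less:
  fixes t :: real
  assumes "0 < a" "0 < b" "0 < c" "b \<le> a * c" "b + 1 \<le> a + c" "0 \<le> t" "t < 1"
  shows "sqrt t * (b / c * hyp2F1 a (b + 1) (c + 1) t) < hyp2F1 a b c t"
proof -
  define q where "q = fps_nth (hypergeo_fps a b c)"
  define p where "p s = b / c * hypergeo_fps a (b + 1) (c + 1) $ s" for s
  have sums: "(\<lambda>s. hypergeo_fps a' b' c' $ s * t ^ s) sums hyp2F1 a' b' c' t" if "c' > 0" for a' b' c'
    using assms that by (intro hyp2F1_sums) auto
  have "sqrt t * (\<Sum>s. p s * t ^ s) < (\<Sum>s. q s * t ^ s)"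
  proof (rule sqrt_mult_suminf_less)
    show "summable (\<lambda>s. p s * t ^ s)"
      using sums[of "c + 1" a "b + 1"] assms unfolding p_def mult.assoc
      by (intro summable_mult) (auto simp: sums_iff)
    show "summable (\<lambda>s. q s * t ^ s)"
      using sums[of c a b] assms by (auto simp: q_def sums_iff)
    show "0 \<le> q s" for s
      using assms hypergeo_fps_nth_pos[of a b c s] by (simp add: q_def)
    show "0 < q 0"
      by (simp add: q_def)
    show "(p s)\<^sup>2 \<le> q s * q (Suc s)" for s
      unfolding p_def q_def using assms(1-5) by (rule hypergeo_fps_nth_shift_bc_sq_le)
  qed (use assms in auto)
  moreover have "(\<Sum>s. p s * t ^ s) = b / c * hyp2F1 a (b + 1) (c + 1) t"
    using sums[of "c + 1" a "b + 1"] assms unfolding p_def mult.assoc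
    by (subst suminf_mult) (auto simp: sums_iff)
  moreover have "(\<Sum>s. q s * t ^ s) = hyp2F1 a b c t"
    using sums[of c a b] assms by (simp add: q_def sums_iff)
  ultimately show ?thesis
    by simp
qed

lemma mult_Gamma_ratio_hyp2F1_sq_Suc_less:
  fixes t :: real
  assumes "0 \<le> \<beta>" "1 \<le> c" "0 < t" "t < 1"
  shows "t * (Gamma (c + 1 + \<beta>) / Gamma (c + 1) * hyp2F1 (c - \<beta>) (- \<beta>) (c + 1) t)\<^sup>2
       < (Gamma (c + \<beta>) / Gamma c * hyp2F1 (c - \<beta> - 1) (- \<beta>) c t)\<^sup>2"
proof -
  define E where "E = (1 - t) powr (1 + 2 * \<beta>)"
  define \<phi> where "\<phi> = Gamma (c + \<beta>) / Gamma c"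
  define F0 where "F0 = hyp2F1 (\<beta> + 1) (c + \<beta>) c t"
  define F1 where "F1 = (c + \<beta>) / c * hyp2F1 (\<beta> + 1) (c + \<beta> + 1) (c + 1) t"
  have "0 < \<phi> * E" "c \<noteq> 0"
    using assms by (simp_all add: \<phi>_def E_def)
  have "Gamma c \<noteq> 0"
    using Gamma_real_pos[of c] assms by linarith
  have L: "Gamma (c + 1 + \<beta>) / Gamma (c + 1) * hyp2F1 (c - \<beta>) (- \<beta>) (c + 1) t = \<phi> * E * F1"
    using hyp2F1_euler[of "c + 1" t "c - \<beta>" "- \<beta>"] Gamma_plus1_pos[of "c + \<beta>"] Gamma_plus1_pos[of c]
      assms \<open>c \<noteq> 0\<close> \<open>Gamma c \<noteq> 0\<close>
    by (simp add: \<phi>_def E_def F1_def field_simps)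
  have R: "Gamma (c + \<beta>) / Gamma c * hyp2F1 (c - \<beta> - 1) (- \<beta>) c t = \<phi> * E * F0"
    using hyp2F1_euler[of c t "c - \<beta> - 1" "- \<beta>"] assms
    by (simp add: \<phi>_def E_def F0_def algebra_simps)
  have "sqrt t * F1 < F0"
    unfolding F0_def F1_def using assms mult_left_mono[of 1 c \<beta>]
    by (intro sqrt_mult_hyp2F1_shift_less) (auto simp: algebra_simps)
  moreover have "0 \<le> sqrt t * F1"
    using assms by (simp add: F1_def hyp2F1_pos less_imp_le)
  ultimately have "(\<phi> * E)\<^sup>2 * (sqrt t * F1)\<^sup>2 < (\<phi> * E)\<^sup>2 * F0\<^sup>2"
    using \<open>0 < \<phi> * E\<close> by (intro mult_strict_left_mono power_strict_mono) auto
  then show ?thesis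
    unfolding L R using \<open>0 < t\<close> by (simp add: power_mult_distrib mult_ac)
qed

theorem lemma2p5:
  fixes n :: nat and t :: real
  assumes "n \<ge> 3" and "0 < t" and "t < 1"
  shows "(\<forall>\<alpha>::real. 0 < \<alpha> \<and> \<alpha> < real n \<longrightarrow>
            (\<forall>l m :: nat. l < m \<longrightarrow>
              Gamma (real m + (real n - \<alpha>) / 2) ^ 2 / Gamma (real m + real n / 2) ^ 2
                * hyp2F1 (real m + (real n + \<alpha>) / 2 - 1) (\<alpha> / 2) (real m + real n / 2) t ^ 2
              < Gamma (real l + (real n - \<alpha>) / 2) ^ 2 / Gamma (real l + real n / 2) ^ 2
                * hyp2F1 (real l + (real n + \<alpha>) / 2 - 1) (\<alpha> / 2) (real l + real n / 2) t ^ 2))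
       \<and> (\<forall>\<alpha>::real. \<alpha> \<le> 0 \<longrightarrow>
            (\<forall>l m :: nat. l < m \<longrightarrow>
              Gamma (real m + (real n - \<alpha>) / 2) ^ 2 / Gamma (real m + real n / 2) ^ 2
                * t ^ m * hyp2F1 (real m + (real n + \<alpha>) / 2 - 1) (\<alpha> / 2) (real m + real n / 2) t ^ 2
              < Gamma (real l + (real n - \<alpha>) / 2) ^ 2 / Gamma (real l + real n / 2) ^ 2
                * t ^ l * hyp2F1 (real l + (real n + \<alpha>) / 2 - 1) (\<alpha> / 2) (real l + real n / 2) t ^ 2))"
proof (intro conjI allI impI)
  fix \<alpha> :: real and l m :: nat
  assume \<alpha>: "0 < \<alpha> \<and> \<alpha> < real n" and "l < m"
  define f where "f k = Gamma (real k + (real n - \<alpha>) / 2) ^ 2 / Gamma (real k + real n / 2) ^ 2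
    * hyp2F1 (real k + (real n + \<alpha>) / 2 - 1) (\<alpha> / 2) (real k + real n / 2) t ^ 2" for k :: nat
  have "f (Suc k) < f k" for k
    using Gamma_ratio_hyp2F1_sq_Suc_less[of "\<alpha> / 2" "real k + real n / 2" t] \<alpha> assms
    by (simp add: f_def power_divide power_mult_distrib add_divide_distrib diff_divide_distrib algebra_simps)
  then show "f m < f l"
    using lift_Suc_mono_less[of "\<lambda>k. - f k", OF _ \<open>l < m\<close>] by simp
next
  fix \<alpha> :: real and l m :: nat
  assume \<alpha>: "\<alpha> \<le> 0" and "l < m"
  define g where "g k = Gamma (real k + (real n - \<alpha>) / 2) ^ 2 / Gamma (real k + real n / 2) ^ 2
    * t ^ k * hyp2F1 (real k + (real n + \<alpha>) / 2 - 1) (\<alpha> / 2) (real k + real n / 2) t ^ 2" for k :: nat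
  have "g (Suc k) < g k" for k
    using mult_strict_left_mono[OF mult_Gamma_ratio_hyp2F1_sq_Suc_less[of "- \<alpha> / 2" "real k + real n / 2" t]
        zero_less_power[of t k]] \<alpha> assms
    by (simp add: g_def power_divide power_mult_distrib add_divide_distrib diff_divide_distrib algebra_simps)
  then show "g m < g l"
    using lift_Suc_mono_less[of "\<lambda>k. - g k", OF _ \<open>l < m\<close>] by simp
qed

end
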